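(* There exists a setting (with pairwise distinct budgets) such that, in the game under the BCP mechanism in which every player's budget-bid is fixed to his true budget ($g_i=B_i$) and each player's strategy is only his value-bid $b_i\ge0$, there is no pure Nash equilibrium (i.e. for every profile of value-bids some player can strictly increase his utility by changing only his own value-bid).
   Context: Setting: there are $k\ge 1$ slots with public click-through rates $\theta_1>\theta_2>\dots>\theta_k>0$, and $n\ge k$ players. Player $i$ has a private value per click $v_i\ge 0$ and a budget $B_i>0$; the budgets $B_1,\dots,B_n$ are pairwise distinct. A setting consists of $k,n,(\theta_j),(v_i),(B_i)$ together with a fixed strict priority order on the players used to break all ties. Each player $i$ submits a value-bid $b_i\ge 0$ and a budget-bid $g_i\ge 0$; a mechanism outputs an injective partial slot assignment (assigned player $i$ gets slot $s(i)\in\{1,\dots,k\}$) and a price per click $p(i)\ge0$ for each assigned player; unassigned players pay nothing. The utility of player $i$ is $u_i=0$ if $i$ is unassigned, $u_i=\theta_{s(i)}(v_i-p(i))$ if $i$ is assigned and $\theta_{s(i)}p(i)\le B_i$, and $u_i=-\infty$ if $i$ is assigned and $\theta_{s(i)}p(i)>B_i$. BCP: order the players by decreasing value-bid (ties broken by the priority order); each player's tentative price per click is the value-bid of the player immediately after him in this order (0 for the last player). Then process the players in this order; each player $i$ is assigned the highest-CTR slot $s$ not yet assigned such that $\theta_s\cdot(\text{his price})\le g_i$, and pays that price per click; if no unassigned slot satisfies this, he is left unassigned and pays nothing. *)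

theory Defs
  imports Complex_Main "HOL-Library.Extended_Real"
begin

text \<open>Players are 0..<n, slots are 1..k (slot 1 has the highest CTR).
  The priority order is a list pr enumerating all players, earlier = higher priority.\<close>

definition bcp_order :: "nat list \<Rightarrow> (nat \<Rightarrow> real) \<Rightarrow> nat list" where
  "bcp_order pr b = sort_key (\<lambda>i. - b i) pr"
  \<comment> \<open>decreasing value-bid; sort_key is stable, so ties are broken by pr\<close>

definition bcp_prices :: "nat list \<Rightarrow> (nat \<Rightarrow> real) \<Rightarrow> (nat \<times> real) list" where
  "bcp_prices pr b = (let os = bcp_order pr b in zip os (map b (tl os) @ [0]))"

fun bcp_proc :: "(nat \<Rightarrow> real) \<Rightarrow> nat \<Rightarrow> (nat \<Rightarrow> real) \<Rightarrow> nat set \<Rightarrow> (nat \<times> real) list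
                  \<Rightarrow> nat \<Rightarrow> (nat \<times> real) option" where
  "bcp_proc \<theta> k g used [] = (\<lambda>_. None)"
| "bcp_proc \<theta> k g used ((i, p) # rest) =
     (let S = {s \<in> {1..k}. s \<notin> used \<and> \<theta> s * p \<le> g i} in
      if S = {} then bcp_proc \<theta> k g used rest
      else (bcp_proc \<theta> k g (insert (Min S) used) rest)(i := Some (Min S, p)))"

text \<open>BCP outcome: for each player, None (unassigned) or Some (slot, price per click).\<close>
definition BCP :: "(nat \<Rightarrow> real) \<Rightarrow> nat \<Rightarrow> nat list \<Rightarrow> (nat \<Rightarrow> real) \<Rightarrow> (nat \<Rightarrow> real)
                   \<Rightarrow> nat \<Rightarrow> (nat \<times> real) option" where
  "BCP \<theta> k pr b g = bcp_proc \<theta> k g {} (bcp_prices pr b)"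

definition utility :: "(nat \<Rightarrow> real) \<Rightarrow> real \<Rightarrow> real \<Rightarrow> (nat \<times> real) option \<Rightarrow> ereal" where
  "utility \<theta> vi Bi out = (case out of None \<Rightarrow> 0
      | Some (s, p) \<Rightarrow> if \<theta> s * p \<le> Bi then ereal (\<theta> s * (vi - p)) else -\<infinity>)"

definition valid_setting :: "nat \<Rightarrow> nat \<Rightarrow> (nat \<Rightarrow> real) \<Rightarrow> (nat \<Rightarrow> real) \<Rightarrow> (nat \<Rightarrow> real)
                             \<Rightarrow> nat list \<Rightarrow> bool" where
  "valid_setting k n \<theta> v B pr \<longleftrightarrow>
     1 \<le> k \<and> k \<le> n \<and>
     (\<forall>j\<in>{1..k}. \<forall>j'\<in>{1..k}. j < j' \<longrightarrow> \<theta> j > \<theta> j') \<and> \<theta> k > 0 \<and>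
     (\<forall>i<n. v i \<ge> 0) \<and> (\<forall>i<n. B i > 0) \<and> inj_on B {0..<n} \<and>
     distinct pr \<and> set pr = {0..<n}"

definition game_util :: "nat \<Rightarrow> (nat \<Rightarrow> real) \<Rightarrow> (nat \<Rightarrow> real) \<Rightarrow> (nat \<Rightarrow> real) \<Rightarrow> nat list
                         \<Rightarrow> (nat \<Rightarrow> real) \<Rightarrow> nat \<Rightarrow> ereal" where
  "game_util k \<theta> v B pr b i = utility \<theta> (v i) (B i) (BCP \<theta> k pr b B i)"

end

theory Submission imports Defs begin

text \<open>Take two slots with CTRs 2 and 1 and three players with (value, budget) equal to (7, 3),
  (8, 6) and (5, 9). A case analysis on the ordering of the value-bids and on their position
  relative to player 0's budget 3 exhibits a profitable deviation everywhere. Most deviations are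
  bids halfway between 3 and a rival's bid: placed directly behind player 0, such a bid raises his
  price above his budget, so he drops out and frees a slot; placed behind another rival, it lets the
  deviator buy a slot at a lower price. With truthful budget-bids BCP never assigns an unaffordable
  slot, so no utility is ever -\<infinity>.\<close>

definition ctr :: "nat \<Rightarrow> real" where
  "ctr s = (if s = 1 then 2 else 1)"

definition val :: "nat \<Rightarrow> real" where
  "val i = (if i = 0 then 7 else if i = 1 then 8 else 5)"

definition budget :: "nat \<Rightarrow> real" where
  "budget i = (if i = 0 then 3 else if i = 1 then 6 else 9)"

abbreviation util :: "(nat \<Rightarrow> real) \<Rightarrow> nat \<Rightarrow> ereal" where
  "util \<equiv> game_util 2 ctr val budget [0, 1, 2]"

definition has_profitable_deviation :: "(nat \<Rightarrow> real) \<Rightarrow> bool" where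
  "has_profitable_deviation b \<longleftrightarrow> (\<exists>i<3. \<exists>x\<ge>0. util (b(i := x)) i > util b i)"

lemma valid_setting_example: "valid_setting 2 3 ctr val budget [0, 1, 2]"
proof -
  have players: "{0..<3::nat} = {0, 1, 2}" and slots: "{1..2::nat} = {1, 2}" by auto
  show ?thesis
    unfolding valid_setting_def players slots by (auto simp: inj_on_def ctr_def val_def budget_def)
qed

lemma bcp_proc_two_slots:
  "bcp_proc \<theta> 2 g used ((i, p) # rest) =
     (if 1 \<notin> used \<and> \<theta> 1 * p \<le> g i then (bcp_proc \<theta> 2 g (insert 1 used) rest)(i := Some (1, p))
      else if 2 \<notin> used \<and> \<theta> 2 * p \<le> g i then (bcp_proc \<theta> 2 g (insert 2 used) rest)(i := Some (2, p))
      else bcp_proc \<theta> 2 g used rest)"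
proof -
  have "{s \<in> {1..2}. s \<notin> used \<and> \<theta> s * p \<le> g i} =
     (if 1 \<notin> used \<and> \<theta> 1 * p \<le> g i then {1} else {}) \<union> (if 2 \<notin> used \<and> \<theta> 2 * p \<le> g i then {2} else {})"
    by (auto simp: atLeastAtMost_iff le_Suc_eq numeral_2_eq_2)
  then show ?thesis
    by (simp add: Let_def)
qed

lemma bcp_order_three_players:
  "bcp_order [p, q, r] b =
     (if b r \<le> b q then (if b q \<le> b p then [p, q, r] else if b r \<le> b p then [q, p, r] else [q, r, p])
      else (if b r \<le> b p then [p, r, q] else if b q \<le> b p then [r, p, q] else [r, q, p]))"
  by (simp add: bcp_order_def)

declare bcp_proc.simps(2) [simp del]

lemmas outcome_simps = game_util_def BCP_def bcp_prices_def Let_def utility_def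
  bcp_order_three_players bcp_proc_two_slots ctr_def val_def budget_def

lemma has_profitable_deviationI:
  assumes "i < 3" and "0 \<le> x" and "util (b(i := x)) i > util b i"
  shows "has_profitable_deviation b"
  using assms unfolding has_profitable_deviation_def by blast

lemma has_profitable_deviation_order_012:
  assumes order: "b 2 \<le> b 1" "b 1 \<le> b 0" and nonneg: "0 \<le> b 0" "0 \<le> b 1" "0 \<le> b 2"
  shows "has_profitable_deviation b"
proof -
  consider "b 0 \<le> 3" | "b 1 \<le> 3" "3 < b 0" | "b 2 \<le> 3" "3 < b 1" | "3 < b 2" by linarith
  then show ?thesis
  proof cases
    case 1
    show ?thesis
      by (rule has_profitable_deviationI[of 2 6]) (use 1 order nonneg in \<open>simp_all add: outcome_simps\<close>)
  next
    case 2
    show ?thesis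
      by (rule has_profitable_deviationI[of 2 "(3 + b 0) / 2"]) (use 2 order nonneg in \<open>simp_all add: outcome_simps\<close>)
  next
    case 3
    show ?thesis
      by (rule has_profitable_deviationI[of 2 "(3 + b 1) / 2"]) (use 3 order nonneg in \<open>simp_all add: outcome_simps\<close>)
  next
    case 4
    show ?thesis
      by (rule has_profitable_deviationI[of 1 "(3 + b 2) / 2"]) (use 4 order nonneg in \<open>simp_all add: outcome_simps\<close>)
  qed
qed

lemma has_profitable_deviation_order_021:
  assumes order: "b 1 < b 2" "b 2 \<le> b 0" and nonneg: "0 \<le> b 0" "0 \<le> b 1" "0 \<le> b 2"
  shows "has_profitable_deviation b"
proof -
  consider "b 2 \<le> 3" | "3 < b 2" "b 1 \<le> 3" "b 2 \<le> 6" | "b 1 \<le> 3" "6 < b 2" | "3 < b 1" by linarith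
  then show ?thesis
  proof cases
    case 1
    show ?thesis
      by (rule has_profitable_deviationI[of 1 "(3 + b 2) / 2"]) (use 1 order nonneg in \<open>simp_all add: outcome_simps\<close>)
  next
    case 2
    show ?thesis
      by (rule has_profitable_deviationI[of 0 "(3 + b 2) / 2"]) (use 2 order nonneg in \<open>simp_all add: outcome_simps\<close>)
  next
    case 3
    show ?thesis
      by (rule has_profitable_deviationI[of 1 "(3 + b 2) / 2"]) (use 3 order nonneg in \<open>simp_all add: outcome_simps\<close>)
  next
    case 4
    show ?thesis
      by (rule has_profitable_deviationI[of 2 "(3 + b 1) / 2"]) (use 4 order nonneg in \<open>simp_all add: outcome_simps\<close>)
  qed
qed

lemma has_profitable_deviation_order_102:
  assumes order: "b 0 < b 1" "b 2 \<le> b 0" and nonneg: "0 \<le> b 0" "0 \<le> b 1" "0 \<le> b 2"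
  shows "has_profitable_deviation b"
proof -
  consider "b 0 \<le> 3" | "3 < b 0" by linarith
  then show ?thesis
  proof cases
    case 1
    show ?thesis
      by (rule has_profitable_deviationI[of 2 "(3 + b 1) / 2"]) (use 1 order nonneg in \<open>simp_all add: outcome_simps\<close>)
  next
    case 2
    show ?thesis
      by (rule has_profitable_deviationI[of 1 "(3 + b 2) / 2"]) (use 2 order nonneg in \<open>simp_all add: outcome_simps\<close>)
  qed
qed

lemma has_profitable_deviation_order_120:
  assumes order: "b 0 < b 2" "b 2 \<le> b 1" and nonneg: "0 \<le> b 0" "0 \<le> b 1" "0 \<le> b 2"
  shows "has_profitable_deviation b"
proof -
  consider "b 2 \<le> 3" | "3 < b 2" "b 0 \<le> 3" | "3 < b 0" by linarith
  then show ?thesis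
  proof cases
    case 1
    show ?thesis
      by (rule has_profitable_deviationI[of 0 "(3 + b 2) / 2"]) (use 1 order nonneg in \<open>simp_all add: outcome_simps\<close>)
  next
    case 2
    show ?thesis
      by (rule has_profitable_deviationI[of 1 "(3 + b 2) / 2"]) (use 2 order nonneg in \<open>simp_all add: outcome_simps\<close>)
  next
    case 3
    show ?thesis
      by (rule has_profitable_deviationI[of 2 "(3 + b 0) / 2"]) (use 3 order nonneg in \<open>simp_all add: outcome_simps\<close>)
  qed
qed

lemma has_profitable_deviation_order_201:
  assumes order: "b 1 \<le> b 0" "b 0 < b 2" and nonneg: "0 \<le> b 0" "0 \<le> b 1" "0 \<le> b 2"
  shows "has_profitable_deviation b"
proof -
  consider "b 0 \<le> 3" | "3 < b 0" "b 1 \<le> 3" | "3 < b 1" by linarith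
  then show ?thesis
  proof cases
    case 1
    show ?thesis
      by (rule has_profitable_deviationI[of 1 "(3 + b 2) / 2"]) (use 1 order nonneg in \<open>simp_all add: outcome_simps\<close>)
  next
    case 2
    show ?thesis
      by (rule has_profitable_deviationI[of 2 "(3 + b 0) / 2"]) (use 2 order nonneg in \<open>simp_all add: outcome_simps\<close>)
  next
    case 3
    show ?thesis
      by (rule has_profitable_deviationI[of 2 "(3 + b 1) / 2"]) (use 3 order nonneg in \<open>simp_all add: outcome_simps\<close>)
  qed
qed

lemma has_profitable_deviation_order_210:
  assumes order: "b 0 < b 1" "b 1 < b 2" and nonneg: "0 \<le> b 0" "0 \<le> b 1" "0 \<le> b 2"
  shows "has_profitable_deviation b"
proof -
  consider "b 1 \<le> 3" "b 2 \<le> 6" | "b 1 \<le> 3" "6 < b 2" | "3 < b 1" "b 0 \<le> 3" | "3 < b 0" by linarith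
  then show ?thesis
  proof cases
    case 1
    show ?thesis
      by (rule has_profitable_deviationI[of 0 "(3 + b 2) / 2"]) (use 1 order nonneg in \<open>simp_all add: outcome_simps\<close>)
  next
    case 2
    show ?thesis
      by (rule has_profitable_deviationI[of 1 "(3 + b 2) / 2"]) (use 2 order nonneg in \<open>simp_all add: outcome_simps\<close>)
  next
    case 3
    show ?thesis
      by (rule has_profitable_deviationI[of 2 "(3 + b 1) / 2"]) (use 3 order nonneg in \<open>simp_all add: outcome_simps\<close>)
  next
    case 4
    show ?thesis
      by (rule has_profitable_deviationI[of 2 "(3 + b 0) / 2"]) (use 4 order nonneg in \<open>simp_all add: outcome_simps\<close>)
  qed
qed

lemma no_pure_nash_equilibrium:
  assumes "\<forall>i<3. 0 \<le> b i"
  shows "has_profitable_deviation b"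
proof -
  have nonneg: "0 \<le> b 0" "0 \<le> b 1" "0 \<le> b 2" using assms by auto
  consider "b 2 \<le> b 1" "b 1 \<le> b 0" | "b 1 < b 2" "b 2 \<le> b 0" | "b 0 < b 1" "b 2 \<le> b 0"
    | "b 0 < b 2" "b 2 \<le> b 1" | "b 1 \<le> b 0" "b 0 < b 2" | "b 0 < b 1" "b 1 < b 2"
    by linarith
  then show ?thesis
    using nonneg has_profitable_deviation_order_012 has_profitable_deviation_order_021
      has_profitable_deviation_order_102 has_profitable_deviation_order_120
      has_profitable_deviation_order_201 has_profitable_deviation_order_210
    by cases blast+
qed

theorem lemma1:
  shows "\<exists>k n \<theta> v B pr. valid_setting k n \<theta> v B pr \<and>
     (\<forall>b :: nat \<Rightarrow> real. (\<forall>i<n. b i \<ge> 0) \<longrightarrow>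
        (\<exists>i<n. \<exists>x\<ge>0. game_util k \<theta> v B pr (b(i := x)) i > game_util k \<theta> v B pr b i))"
  using valid_setting_example no_pure_nash_equilibrium
  unfolding has_profitable_deviation_def by blast

end
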